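(* Let $S_m$ be the model sphere of revolution and let $f\colon(-1,1)\to\mathbb{R}$ be the rotation function of the first return map to the Birkhoff annulus $A$ of the minimal parallel, as described in the context. Then $f$ is strictly decreasing on $(-1,1)$.
   Context: A sphere of revolution $S\subset\mathbb{R}^3$ is a surface diffeomorphic to $S^2$ invariant under rotations about the $z$-axis. Its intersection with the $(x,z)$-half-plane is parametrized by arclength by a closed curve $\sigma(s)=(r(s),z(s))$, $s\in\mathbb{R}/M\mathbb{Z}$ ($M$ its length), positively oriented, with $\sigma(0)$ the lower intersection point with the $z$-axis. Coordinates $\Phi(s,\theta)=(r(s)\cos\theta,r(s)\sin\theta,z(s))$, $s\in(0,M/2)$, $\theta\in\mathbb{R}/2\pi\mathbb{Z}$; the induced metric is $ds^2+r(s)^2d\theta^2$. The parallel $P_{s_0}$ is the curve $\theta\mapsto\Phi(s_0,\theta)$. The model sphere $S_m$ is a sphere of revolution with: $M>2\pi$; $r(s)=\sin s$ for $s\in[0,\pi/2]$; $\sigma$ symmetric with respect to the $x$-axis (so $S_m$ is symmetric under $z\mapsto -z$); and $r|_{(0,M/2)}$ has exactly three critical points: maxima at $s=\pi/2$ and $s=M/2-\pi/2$ with value $1$, and a minimum at $s=M/4$ with value $r_{min}\in(0,1)$. Unit tangent vectors over $\Phi(s,\theta)$ are described by the angle $\beta\in\mathbb{R}/2\pi\mathbb{Z}$ from $\partial_\theta$ to the vector; in coordinates $(s,\theta,\beta)$ the geodesic flow is $s'=\sin\beta$, $\beta'=\frac{r'(s)}{r(s)}\cos\beta$, $\theta'=\frac{\cos\beta}{r(s)}$.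 The Birkhoff annulus of $P_{M/4}$ is $A=\{(\Phi(M/4,\theta),\beta):\theta\in\mathbb{R}/2\pi\mathbb{Z},\ \beta\in(0,\pi)\}$, parametrized by $(x,\eta)$ with $x\in\mathbb{R}/L\mathbb{Z}$ the arclength along $P_{M/4}$ ($L=2\pi r_{min}$) and $\eta=-\cos\beta\in(-1,1)$. Every geodesic flow line through $A$ is transverse to $A$ and returns to $A$; by invariance of the Clairaut integral $r(s)\cos\beta$ and rotational symmetry, the first return map has the form $\rho(x,\eta)=(x+f(\eta)\bmod L,\ \eta)$, where $f\colon(-1,1)\to\mathbb{R}$ is the continuous function with $f(0)=0$ (the points $(x,0)$ lie on meridians, which are closed geodesics). *)

theory Defs
  imports "HOL-Analysis.Analysis"
begin

definition smooth_fun :: "(real \<Rightarrow> real) \<Rightarrow> bool" where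
  "smooth_fun g \<longleftrightarrow> (\<forall>k::nat. \<forall>x. ((deriv ^^ k) g) differentiable (at x))"

text \<open>Profile curve sigma(s) = (r s, z s) of a sphere of revolution: a smooth simple closed
  curve of length M in the (x,z)-plane parametrized by arclength, symmetric under x \<mapsto> -x
  (rotation invariance), positively oriented, sigma(0) the lower point on the z-axis and
  r > 0 on (0, M/2).\<close>
definition sphere_of_revolution :: "(real \<Rightarrow> real) \<Rightarrow> (real \<Rightarrow> real) \<Rightarrow> real \<Rightarrow> bool" where
  "sphere_of_revolution r z M \<longleftrightarrow>
     M > 0 \<and> smooth_fun r \<and> smooth_fun z \<and>
     (\<forall>s. r (s + M) = r s \<and> z (s + M) = z s) \<and>
     inj_on (\<lambda>s. (r s, z s)) {0..<M} \<and>
     (\<forall>s. (deriv r s)\<^sup>2 + (deriv z s)\<^sup>2 = 1) \<and>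
     (\<forall>s. r (- s) = - r s \<and> z (- s) = z s) \<and>
     r 0 = 0 \<and> (\<forall>s\<in>{0<..<M/2}. r s > 0) \<and> z 0 < z (M/2)"

definition model_sphere :: "(real \<Rightarrow> real) \<Rightarrow> (real \<Rightarrow> real) \<Rightarrow> real \<Rightarrow> real \<Rightarrow> bool" where
  "model_sphere r z M rmin \<longleftrightarrow>
     sphere_of_revolution r z M \<and> M > 2 * pi \<and>
     (\<forall>s\<in>{0..pi/2}. r s = sin s) \<and>
     (\<forall>s. r (M/2 - s) = r s \<and> z (M/2 - s) = - z s) \<and>
     {s\<in>{0<..<M/2}. deriv r s = 0} = {pi/2, M/4, M/2 - pi/2} \<and>
     r (pi/2) = 1 \<and> r (M/2 - pi/2) = 1 \<and>
     r (M/4) = rmin \<and> 0 < rmin \<and> rmin < 1"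

definition geod_traj :: "(real \<Rightarrow> real) \<Rightarrow> real \<Rightarrow> (real \<Rightarrow> real) \<Rightarrow> (real \<Rightarrow> real) \<Rightarrow> (real \<Rightarrow> real) \<Rightarrow> bool" where
  "geod_traj r T s th b \<longleftrightarrow>
     (\<forall>t\<in>{0..T}.
        (s has_real_derivative sin (b t)) (at t within {0..T}) \<and>
        (b has_real_derivative (deriv r (s t) / r (s t) * cos (b t))) (at t within {0..T}) \<and>
        (th has_real_derivative (cos (b t) / r (s t))) (at t within {0..T}))"

text \<open>f is the rotation function of the first return map to the Birkhoff annulus of the
  parallel P_{M/4}: continuous on (-1,1), f 0 = 0, and for every point (x, eta) of the annulus,
  x = rmin * theta, eta = - cos beta, beta in (0,pi), the first return of the geodesic flow to the
  annulus lands at x + f eta mod L, L = 2 pi rmin.\<close>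
definition rotation_function :: "(real \<Rightarrow> real) \<Rightarrow> real \<Rightarrow> real \<Rightarrow> (real \<Rightarrow> real) \<Rightarrow> bool" where
  "rotation_function r M rmin f \<longleftrightarrow>
     continuous_on {-1<..<1} f \<and> f 0 = 0 \<and>
     (\<forall>\<eta> T s th b. \<eta> \<in> {-1<..<1} \<and> T > 0 \<and> geod_traj r T s th b \<and>
        s 0 = M/4 \<and> sin (b 0) > 0 \<and> - cos (b 0) = \<eta> \<and>
        (\<forall>t\<in>{0..T}. 0 < s t \<and> s t < M/2) \<and>
        s T = M/4 \<and> sin (b T) > 0 \<and>
        (\<forall>t\<in>{0<..<T}. \<not> (s t = M/4 \<and> sin (b t) > 0))
        \<longrightarrow> (\<exists>k::int. f \<eta> = rmin * (th T - th 0) + of_int k * (2 * pi * rmin)))"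

end

theory Submission
  imports Defs
begin

text \<open>A geodesic through the minimal parallel with Clairaut constant \<open>c = r cos \<beta>\<close>,
  \<open>0 < \<bar>c\<bar> < rmin\<close>, crosses the neck \<open>pi/2 \<le> s \<le> M/2 - pi/2\<close>, turns around in each of the
  two caps and comes back to the minimal parallel. The caps are round (\<open>r = sin s\<close>), so there the
  geodesic runs along a great circle and each visit to a cap advances \<open>\<theta>\<close> by exactly \<open>pi\<close>; in
  the neck \<open>d\<theta>/ds = c / (r\<^sup>2 sin \<beta>)\<close>. Hence, with \<open>c = - rmin \<eta>\<close> and \<open>G c\<close> the integral of
  \<open>d\<theta>/ds\<close> across the neck, \<open>f \<eta>\<close> is congruent to \<open>2 rmin (G c + pi)\<close> modulo \<open>L = 2 pi rmin\<close>.
  Now \<open>G\<close> is continuous, odd and strictly increasing, so \<open>f\<close> and \<open>\<eta> \<mapsto> 2 rmin G (- rmin \<eta>)\<close> are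
  continuous on \<open>(-1, 1)\<close>, vanish at \<open>0\<close> and differ by multiples of \<open>L\<close>; they coincide, and \<open>f\<close>
  is strictly decreasing.\<close>

section \<open>Geodesic flow in profile coordinates\<close>

definition geod_traj_on ::
    "(real \<Rightarrow> real) \<Rightarrow> real \<Rightarrow> real \<Rightarrow> (real \<Rightarrow> real) \<Rightarrow> (real \<Rightarrow> real) \<Rightarrow> (real \<Rightarrow> real) \<Rightarrow> bool" where
  "geod_traj_on r a e s th b \<longleftrightarrow> (\<forall>t\<in>{a..e}.
     (s has_real_derivative sin (b t)) (at t within {a..e}) \<and>
     (b has_real_derivative (deriv r (s t) / r (s t) * cos (b t))) (at t within {a..e}) \<and>
     (th has_real_derivative (cos (b t) / r (s t))) (at t within {a..e}))"

text \<open>The two-sided variant is what the explicit solutions satisfy and what survives shifts and time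
  reversal; the one-sided variant, as in \<open>geod_traj\<close>, is what gluing needs.\<close>

definition geod_traj_at ::
    "(real \<Rightarrow> real) \<Rightarrow> real \<Rightarrow> real \<Rightarrow> (real \<Rightarrow> real) \<Rightarrow> (real \<Rightarrow> real) \<Rightarrow> (real \<Rightarrow> real) \<Rightarrow> bool" where
  "geod_traj_at r a e s th b \<longleftrightarrow> (\<forall>t\<in>{a..e}.
     (s has_real_derivative sin (b t)) (at t) \<and>
     (b has_real_derivative (deriv r (s t) / r (s t) * cos (b t))) (at t) \<and>
     (th has_real_derivative (cos (b t) / r (s t))) (at t))"

lemma geod_traj_at_imp_on: "geod_traj_at r a e s th b \<Longrightarrow> geod_traj_on r a e s th b"
  unfolding geod_traj_at_def geod_traj_on_def by (auto intro: has_field_derivative_at_within)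

lemma geod_traj_eq_on: "geod_traj r T s th b \<longleftrightarrow> geod_traj_on r 0 T s th b"
  unfolding geod_traj_def geod_traj_on_def by simp

lemma has_real_derivative_outside_closure:
  fixes f :: "real \<Rightarrow> real"
  assumes "t \<notin> closure S"
  shows "(f has_real_derivative D) (at t within S)"
  unfolding has_field_derivative_iff
  using not_in_closure_trivial_limitI[OF assms] by (rule Lim_trivial_limit)

lemma has_real_derivative_glue:
  fixes f1 f2 :: "real \<Rightarrow> real"
  assumes "a \<le> m" "m \<le> e" "t \<in> {a..e}"
    and d1: "\<forall>t\<in>{a..m}. (f1 has_real_derivative D1 t) (at t within {a..m})"
    and d2: "\<forall>t\<in>{m..e}. (f2 has_real_derivative D2 t) (at t within {m..e})"
    and "f1 m = f2 m" "D1 m = D2 m"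
  shows "((\<lambda>t. if t \<le> m then f1 t else f2 t) has_real_derivative (if t \<le> m then D1 t else D2 t))
           (at t within {a..e})"
proof -
  define g where "g = (\<lambda>t. if t \<le> m then f1 t else f2 t)"
  define D where "D = (if t \<le> m then D1 t else D2 t)"
  have left: "(g has_real_derivative D) (at t within {a..m})"
  proof (cases "t \<le> m")
    case True
    then have "t \<in> {a..m}" using assms by auto
    then have "(g has_real_derivative D1 t) (at t within {a..m})"
      by (intro has_field_derivative_transform_within[OF d1[rule_format], of _ 1]) (auto simp: g_def)
    then show ?thesis using True by (simp add: D_def)
  qed (auto intro: has_real_derivative_outside_closure)
  have right: "(g has_real_derivative D) (at t within {m..e})"
  proof (cases "m \<le> t")
    case True
    then have "t \<in> {m..e}" using assms by auto
    then have "(g has_real_derivative D2 t) (at t within {m..e})"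
      by (intro has_field_derivative_transform_within[OF d2[rule_format], of _ 1])
         (use assms in \<open>auto simp: g_def\<close>)
    then show ?thesis using True assms by (auto simp: D_def)
  qed (auto intro: has_real_derivative_outside_closure)
  have split: "{a..e} = {a..m} \<union> {m..e}" using assms by auto
  show ?thesis
    using left right
    unfolding g_def[symmetric] D_def[symmetric] split has_field_derivative_iff Lim_within_Un
    by simp
qed

lemma geod_traj_on_glue:
  assumes "a \<le> m" "m \<le> e"
    and T1: "geod_traj_on r a m s1 th1 b1" and T2: "geod_traj_on r m e s2 th2 b2"
    and "s1 m = s2 m" "th1 m = th2 m" "b1 m = b2 m"
  shows "geod_traj_on r a e (\<lambda>t. if t \<le> m then s1 t else s2 t) (\<lambda>t. if t \<le> m then th1 t else th2 t)
           (\<lambda>t. if t \<le> m then b1 t else b2 t)"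
  unfolding geod_traj_on_def
proof (intro ballI conjI)
  fix t assume t: "t \<in> {a..e}"
  note glue = has_real_derivative_glue[OF assms(1,2) t]
  show "((\<lambda>t. if t \<le> m then s1 t else s2 t) has_real_derivative sin (if t \<le> m then b1 t else b2 t))
      (at t within {a..e})"
    using glue[of s1 "\<lambda>t. sin (b1 t)" s2 "\<lambda>t. sin (b2 t)"] T1 T2 assms
    unfolding geod_traj_on_def by (auto simp: if_distrib)
  show "((\<lambda>t. if t \<le> m then b1 t else b2 t) has_real_derivative
          deriv r (if t \<le> m then s1 t else s2 t) / r (if t \<le> m then s1 t else s2 t) *
          cos (if t \<le> m then b1 t else b2 t)) (at t within {a..e})"
    using glue[of b1 "\<lambda>t. deriv r (s1 t) / r (s1 t) * cos (b1 t)"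
        b2 "\<lambda>t. deriv r (s2 t) / r (s2 t) * cos (b2 t)"] T1 T2 assms
    unfolding geod_traj_on_def by (auto simp: if_distrib)
  show "((\<lambda>t. if t \<le> m then th1 t else th2 t) has_real_derivative
          cos (if t \<le> m then b1 t else b2 t) / r (if t \<le> m then s1 t else s2 t)) (at t within {a..e})"
    using glue[of th1 "\<lambda>t. cos (b1 t) / r (s1 t)" th2 "\<lambda>t. cos (b2 t) / r (s2 t)"] T1 T2 assms
    unfolding geod_traj_on_def by (auto simp: if_distrib)
qed

lemma geod_traj_on_reflect:
  assumes "geod_traj_on r a e s th b"
  shows "geod_traj_on r a e s (\<lambda>t. - th t) (\<lambda>t. pi - b t)"
  using assms unfolding geod_traj_on_def by (auto intro!: derivative_eq_intros)

lemma geod_traj_at_shift: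
  assumes "geod_traj_at r a e s th b"
  shows "geod_traj_at r (a - h) (e - h) (\<lambda>t. s (t + h)) (\<lambda>t. th (t + h) + C) (\<lambda>t. b (t + h))"
  unfolding geod_traj_at_def
proof (intro ballI conjI)
  fix t assume "t \<in> {a - h..e - h}"
  then have "t + h \<in> {a..e}" by auto
  then have s: "(s has_real_derivative sin (b (t + h))) (at (t + h))"
    and b: "(b has_real_derivative deriv r (s (t + h)) / r (s (t + h)) * cos (b (t + h))) (at (t + h))"
    and th: "(th has_real_derivative cos (b (t + h)) / r (s (t + h))) (at (t + h))"
    using assms unfolding geod_traj_at_def by auto
  have shift: "((\<lambda>t. t + h) has_real_derivative 1) (at t)"
    by (auto intro!: derivative_eq_intros)
  show "((\<lambda>t. s (t + h)) has_real_derivative sin (b (t + h))) (at t)"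
    using DERIV_chain2[OF s shift] by simp
  show "((\<lambda>t. b (t + h)) has_real_derivative deriv r (s (t + h)) / r (s (t + h)) * cos (b (t + h))) (at t)"
    using DERIV_chain2[OF b shift] by simp
  show "((\<lambda>t. th (t + h) + C) has_real_derivative cos (b (t + h)) / r (s (t + h))) (at t)"
    using DERIV_add[OF DERIV_chain2[OF th shift] DERIV_const[of C]] by simp
qed

lemma geod_traj_at_reverse:
  assumes "geod_traj_at r a e s th b"
  shows "geod_traj_at r (h - e) (h - a) (\<lambda>t. s (h - t)) (\<lambda>t. C - th (h - t)) (\<lambda>t. - b (h - t))"
  unfolding geod_traj_at_def
proof (intro ballI conjI)
  fix t assume "t \<in> {h - e..h - a}"
  then have "h - t \<in> {a..e}" by auto
  then have s: "(s has_real_derivative sin (b (h - t))) (at (h - t))"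
    and b: "(b has_real_derivative deriv r (s (h - t)) / r (s (h - t)) * cos (b (h - t))) (at (h - t))"
    and th: "(th has_real_derivative cos (b (h - t)) / r (s (h - t))) (at (h - t))"
    using assms unfolding geod_traj_at_def by auto
  have rev: "((\<lambda>t. h - t) has_real_derivative - 1) (at t)"
    by (auto intro!: derivative_eq_intros)
  show "((\<lambda>t. s (h - t)) has_real_derivative sin (- b (h - t))) (at t)"
    using DERIV_chain2[OF s rev] by simp
  show "((\<lambda>t. - b (h - t)) has_real_derivative
      deriv r (s (h - t)) / r (s (h - t)) * cos (- b (h - t))) (at t)"
    using DERIV_minus[OF DERIV_chain2[OF b rev]] by simp
  show "((\<lambda>t. C - th (h - t)) has_real_derivative cos (- b (h - t)) / r (s (h - t))) (at t)"
    using DERIV_diff[OF DERIV_const[of C] DERIV_chain2[OF th rev]] by simp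
qed

lemma geod_traj_at_mirror:
  assumes "geod_traj_at r a e s th b"
    and "\<And>x. r (m - x) = r x" "\<And>x. deriv r (m - x) = - deriv r x"
  shows "geod_traj_at r a e (\<lambda>t. m - s t) th (\<lambda>t. - b t)"
  using assms unfolding geod_traj_at_def by (auto intro!: derivative_eq_intros)

section \<open>Great circles in the round caps\<close>

text \<open>The geodesic of the unit sphere (profile \<open>r = sin\<close>) with Clairaut constant \<open>c\<close>, parametrized
  by arclength: it leaves the equator at \<open>t = 0\<close>, touches the parallel \<open>sin s = c\<close> at \<open>t = pi/2\<close> and
  is back on the equator at \<open>t = pi\<close>. The angle \<open>cap_theta c\<close> is the continuous branch of
  \<open>arctan (c * tan t)\<close>.\<close>

definition cap_s :: "real \<Rightarrow> real \<Rightarrow> real" where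
  "cap_s c t = arccos (sqrt (1 - c\<^sup>2) * sin t)"

definition cap_theta :: "real \<Rightarrow> real \<Rightarrow> real" where
  "cap_theta c t = arctan ((c - 1) * sin t * cos t / ((cos t)\<^sup>2 + c * (sin t)\<^sup>2)) + t"

definition cap_beta :: "real \<Rightarrow> real \<Rightarrow> real" where
  "cap_beta c t = - arctan (sqrt (1 - c\<^sup>2) / c * cos t)"

lemma sqrt_one_minus_square_squared:
  fixes c :: real
  assumes "\<bar>c\<bar> \<le> 1"
  shows "(sqrt (1 - c\<^sup>2))\<^sup>2 = 1 - c\<^sup>2"
  using assms by (simp add: abs_square_le_1)

lemma cap_denom_eq:
  fixes c t :: real
  assumes "\<bar>c\<bar> \<le> 1"
  shows "1 - (sqrt (1 - c\<^sup>2) * sin t)\<^sup>2 = (cos t)\<^sup>2 + c\<^sup>2 * (sin t)\<^sup>2"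
  unfolding power_mult_distrib sqrt_one_minus_square_squared[OF assms]
  by (simp add: cos_squared_eq algebra_simps)

lemma cos_square_add_pos:
  fixes a t :: real
  assumes "0 < a"
  shows "0 < (cos t)\<^sup>2 + a * (sin t)\<^sup>2"
proof (cases "sin t = 0")
  case True
  then show ?thesis using sin_cos_squared_add[of t] by simp
qed (use assms in \<open>simp add: add_nonneg_pos\<close>)

lemma cap_denom_pos:
  fixes c t :: real
  shows "c \<noteq> 0 \<Longrightarrow> 0 < (cos t)\<^sup>2 + c\<^sup>2 * (sin t)\<^sup>2"
  by (simp add: cos_square_add_pos)

lemma cap_theta_deriv_identity:
  fixes S Co c :: real
  assumes sc: "S\<^sup>2 + Co\<^sup>2 = 1"
  defines "D \<equiv> Co\<^sup>2 + c * S\<^sup>2" and "N \<equiv> (c - 1) * S * Co"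
  assumes D: "D \<noteq> 0"
  shows "1 + inverse (1 + (N / D)\<^sup>2) * (((c - 1) * (Co * Co - S * S) * D - N * (2 * (c - 1) * S * Co)) / (D * D))
         = c / (Co\<^sup>2 + c\<^sup>2 * S\<^sup>2)"
proof -
  have E: "N\<^sup>2 + D\<^sup>2 = Co\<^sup>2 + c\<^sup>2 * S\<^sup>2"
    using sc unfolding N_def D_def by algebra
  have key: "N\<^sup>2 + D\<^sup>2 + ((c - 1) * (Co * Co - S * S) * D - N * (2 * (c - 1) * S * Co)) = c"
    using sc unfolding N_def D_def by algebra
  define X where "X = N\<^sup>2 + D\<^sup>2"
  have X: "0 < X" using D by (simp add: X_def add_nonneg_pos)
  have "inverse (1 + (N / D)\<^sup>2) = D\<^sup>2 / X"
    using D by (simp add: X_def field_simps power2_eq_square)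
  then have "1 + inverse (1 + (N / D)\<^sup>2) * (((c - 1) * (Co * Co - S * S) * D - N * (2 * (c - 1) * S * Co)) / (D * D))
      = (X + ((c - 1) * (Co * Co - S * S) * D - N * (2 * (c - 1) * S * Co))) / X"
    using D X by (simp add: field_simps power2_eq_square)
  then show ?thesis using key unfolding E[symmetric] X_def by simp
qed

lemma cap_theta_has_deriv:
  assumes "0 < c"
  shows "(cap_theta c has_real_derivative c / ((cos t)\<^sup>2 + c\<^sup>2 * (sin t)\<^sup>2)) (at t)"
proof -
  define D where "D = (cos t)\<^sup>2 + c * (sin t)\<^sup>2"
  define N where "N = (c - 1) * sin t * cos t"
  have "0 < D" unfolding D_def using assms by (rule cos_square_add_pos)
  then have "(cap_theta c has_real_derivative
      inverse (1 + (N / D)\<^sup>2) * (((c - 1) * (cos t * cos t - sin t * sin t) * D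
        - N * (2 * (c - 1) * sin t * cos t)) / (D * D)) + 1) (at t)"
    unfolding cap_theta_def[abs_def] D_def N_def
    by (auto intro!: derivative_eq_intros simp: power2_eq_square algebra_simps)
  then show ?thesis
    using cap_theta_deriv_identity[OF sin_cos_squared_add] \<open>0 < D\<close> unfolding D_def N_def
    by (simp add: add.commute)
qed

lemma
  assumes "0 < c" "c < 1"
  shows sin_cap_beta: "sin (cap_beta c t) = - sqrt (1 - c\<^sup>2) * cos t / sqrt ((cos t)\<^sup>2 + c\<^sup>2 * (sin t)\<^sup>2)"
    and cos_cap_beta: "cos (cap_beta c t) = c / sqrt ((cos t)\<^sup>2 + c\<^sup>2 * (sin t)\<^sup>2)"
    and cap_beta_has_deriv: "(cap_beta c has_real_derivative
          c * (sqrt (1 - c\<^sup>2) * sin t) / ((cos t)\<^sup>2 + c\<^sup>2 * (sin t)\<^sup>2)) (at t)"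
proof -
  define k where "k = sqrt (1 - c\<^sup>2) / c"
  have "1 + (k * cos t)\<^sup>2 = ((cos t)\<^sup>2 + c\<^sup>2 * (sin t)\<^sup>2) / c\<^sup>2"
    using assms unfolding k_def power_mult_distrib power_divide
    by (simp add: sqrt_one_minus_square_squared field_simps cos_squared_eq)
  then have sq: "sqrt (1 + (k * cos t)\<^sup>2) = sqrt ((cos t)\<^sup>2 + c\<^sup>2 * (sin t)\<^sup>2) / c"
    using assms by (simp add: real_sqrt_divide)
  show "sin (cap_beta c t) = - sqrt (1 - c\<^sup>2) * cos t / sqrt ((cos t)\<^sup>2 + c\<^sup>2 * (sin t)\<^sup>2)"
    unfolding cap_beta_def k_def[symmetric] sin_minus sin_arctan sq using assms by (simp add: k_def)
  show "cos (cap_beta c t) = c / sqrt ((cos t)\<^sup>2 + c\<^sup>2 * (sin t)\<^sup>2)"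
    unfolding cap_beta_def k_def[symmetric] cos_minus cos_arctan sq by simp
  have "(cap_beta c has_real_derivative - (inverse (1 + (k * cos t)\<^sup>2) * (k * - sin t))) (at t)"
    unfolding cap_beta_def[abs_def] k_def[symmetric] by (auto intro!: derivative_eq_intros)
  moreover have "- (inverse (1 + (k * cos t)\<^sup>2) * (k * - sin t))
      = c * (sqrt (1 - c\<^sup>2) * sin t) / ((cos t)\<^sup>2 + c\<^sup>2 * (sin t)\<^sup>2)"
  proof -
    have "(cos t)\<^sup>2 + c\<^sup>2 * (sin t)\<^sup>2 \<noteq> 0" using cap_denom_pos[of c t] assms by simp
    then show ?thesis
      unfolding \<open>1 + (k * cos t)\<^sup>2 = _\<close> using assms by (simp add: k_def field_simps power2_eq_square)
  qed
  ultimately show "(cap_beta c has_real_derivative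
      c * (sqrt (1 - c\<^sup>2) * sin t) / ((cos t)\<^sup>2 + c\<^sup>2 * (sin t)\<^sup>2)) (at t)"
    by simp
qed

lemma cap_s_has_deriv:
  assumes "0 < c" "c < 1"
  shows "(cap_s c has_real_derivative
           - sqrt (1 - c\<^sup>2) * cos t / sqrt ((cos t)\<^sup>2 + c\<^sup>2 * (sin t)\<^sup>2)) (at t)"
proof -
  let ?v = "sqrt (1 - c\<^sup>2) * sin t"
  have eq: "1 - ?v\<^sup>2 = (cos t)\<^sup>2 + c\<^sup>2 * (sin t)\<^sup>2" using assms by (intro cap_denom_eq) auto
  then have "?v\<^sup>2 < 1" using cap_denom_pos[of c t] assms by linarith
  then have "- 1 < ?v" "?v < 1" by (auto simp: abs_square_less_1)
  then have "(cap_s c has_real_derivative inverse (- sqrt (1 - ?v\<^sup>2)) * (sqrt (1 - c\<^sup>2) * cos t)) (at t)"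
    unfolding cap_s_def[abs_def] by (auto intro!: derivative_eq_intros DERIV_arccos[THEN DERIV_chain2])
  then show ?thesis unfolding eq by (simp add: divide_inverse mult.commute)
qed

lemma cap_sin_bounds:
  assumes "0 < c" "c < 1" "t \<in> {0..pi}"
  shows "0 \<le> sqrt (1 - c\<^sup>2) * sin t" "sqrt (1 - c\<^sup>2) * sin t < 1"
proof -
  have c: "\<bar>c\<bar> \<le> 1" using assms by simp
  then have "c\<^sup>2 \<le> 1" by (simp add: abs_square_le_1)
  then show "0 \<le> sqrt (1 - c\<^sup>2) * sin t" using assms by (auto intro!: mult_nonneg_nonneg sin_ge_zero)
  from c have "(sqrt (1 - c\<^sup>2) * sin t)\<^sup>2 < 1"
    using cap_denom_eq[of c t] cap_denom_pos[of c t] assms by linarith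
  then show "sqrt (1 - c\<^sup>2) * sin t < 1" by (auto simp: abs_square_less_1)
qed

lemma cap_s_range:
  assumes "0 < c" "c < 1" "t \<in> {0..pi}"
  shows "0 < cap_s c t" "cap_s c t \<le> pi/2"
  using cap_sin_bounds[OF assms] arccos_lt_bounded arccos_le_pi2 unfolding cap_s_def by auto

lemma arctan_eq_arccos:
  assumes "0 < c" "c < 1"
  shows "arctan (sqrt (1 - c\<^sup>2) / c) = arccos c"
proof -
  have "0 < arccos c" "arccos c < pi/2"
    using arccos_lt_bounded[of c] arccos_less_arccos[of 0 c] assms by auto
  moreover have "tan (arccos c) = sqrt (1 - c\<^sup>2) / c"
    using assms by (simp add: tan_def sin_arccos)
  ultimately show ?thesis using arctan_tan[of "arccos c"] by simp
qed

lemma cap_endpoints: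
  assumes "0 < c" "c < 1"
  shows "cap_s c 0 = pi/2" "cap_s c pi = pi/2" "cap_theta c 0 = 0" "cap_theta c pi = pi"
    "cap_beta c 0 = - arccos c" "cap_beta c pi = arccos c"
  using arctan_eq_arccos[OF assms] by (simp_all add: cap_s_def cap_theta_def cap_beta_def arctan_minus)

lemma round_cap:
  assumes round: "\<And>x. x \<in> {0<..pi/2} \<Longrightarrow> r x = sin x \<and> deriv r x = cos x"
    and c: "0 < c" "c < 1"
  shows "geod_traj_at r 0 pi (cap_s c) (cap_theta c) (cap_beta c)"
  unfolding geod_traj_at_def
proof (intro ballI conjI)
  fix t assume t: "t \<in> {0..pi}"
  let ?v = "sqrt (1 - c\<^sup>2) * sin t"
  let ?D = "(cos t)\<^sup>2 + c\<^sup>2 * (sin t)\<^sup>2"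
  have D: "0 < ?D" "sqrt ?D * sqrt ?D = ?D" using cap_denom_pos[of c t] c by auto
  have v: "0 \<le> ?v" "?v \<le> 1" "1 - ?v\<^sup>2 = ?D"
    using cap_sin_bounds[OF c t] cap_denom_eq[of c t] c by auto
  have r: "r (cap_s c t) = sqrt ?D" and dr: "deriv r (cap_s c t) = ?v"
    using round[of "cap_s c t"] cap_s_range[OF c t] v by (auto simp: cap_s_def sin_arccos)
  show "(cap_s c has_real_derivative sin (cap_beta c t)) (at t)"
    using cap_s_has_deriv[OF c] by (simp add: sin_cap_beta[OF c])
  show "(cap_beta c has_real_derivative deriv r (cap_s c t) / r (cap_s c t) * cos (cap_beta c t)) (at t)"
    using cap_beta_has_deriv[OF c, of t] D unfolding r dr cos_cap_beta[OF c] by (simp add: field_simps)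
  show "(cap_theta c has_real_derivative cos (cap_beta c t) / r (cap_s c t)) (at t)"
    using cap_theta_has_deriv[OF c(1), of t] D unfolding r cos_cap_beta[OF c] by (simp add: field_simps)
qed

section \<open>The turning angle across the neck\<close>

text \<open>Along a geodesic with Clairaut constant \<open>c = r cos \<beta>\<close> one has \<open>d\<theta>/ds = c / (r\<^sup>2 sin \<beta>)\<close>.\<close>

definition dtheta_ds :: "(real \<Rightarrow> real) \<Rightarrow> real \<Rightarrow> real \<Rightarrow> real" where
  "dtheta_ds r c x = c / ((r x)\<^sup>2 * sqrt (1 - (c / r x)\<^sup>2))"

definition neck_angle :: "(real \<Rightarrow> real) \<Rightarrow> real \<Rightarrow> real \<Rightarrow> real" where
  "neck_angle r M c = integral {pi/2..M/2 - pi/2} (dtheta_ds r c)"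

lemma power2_div_less_1:
  fixes c R :: real
  assumes "\<bar>c\<bar> < R"
  shows "(c / R)\<^sup>2 < 1"
proof -
  have "0 < R" using assms by linarith
  then have "\<bar>c / R\<bar> < 1" using assms by (simp add: abs_divide divide_less_eq)
  then show ?thesis by (simp add: abs_square_less_1)
qed

lemma div_sqrt_strict_mono:
  fixes R c1 c2 :: real
  assumes "- R < c1" "c1 < c2" "c2 < R"
  shows "c1 / sqrt (1 - (c1/R)\<^sup>2) < c2 / sqrt (1 - (c2/R)\<^sup>2)"
proof -
  have pos: "0 < sqrt (1 - (c/R)\<^sup>2)" if "\<bar>c\<bar> < R" for c
    using power2_div_less_1[OF that] by simp
  have nonneg: "a / sqrt (1 - (a/R)\<^sup>2) < b / sqrt (1 - (b/R)\<^sup>2)" if "0 \<le> a" "a < b" "b < R" for a b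
  proof -
    have "(a/R)\<^sup>2 \<le> (b/R)\<^sup>2" using that by (intro power_mono divide_right_mono) auto
    moreover have "0 < sqrt (1 - (a/R)\<^sup>2)" "0 < sqrt (1 - (b/R)\<^sup>2)"
      using that by (intro pos; simp)+
    ultimately have "a / sqrt (1 - (a/R)\<^sup>2) \<le> a / sqrt (1 - (b/R)\<^sup>2)"
      using that by (intro divide_left_mono) auto
    also have "\<dots> < b / sqrt (1 - (b/R)\<^sup>2)"
      using that pos[of b] by (simp add: divide_strict_right_mono)
    finally show ?thesis .
  qed
  consider "0 \<le> c1" | "c1 < 0" "0 < c2" | "c2 \<le> 0" by linarith
  then show ?thesis
  proof cases
    case 2
    have "c1 / sqrt (1 - (c1/R)\<^sup>2) < 0" using 2 assms pos[of c1] by (simp add: divide_neg_pos)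
    moreover have "0 < c2 / sqrt (1 - (c2/R)\<^sup>2)" using 2 assms pos[of c2] by simp
    ultimately show ?thesis by linarith
  next
    case 3
    then have "- c2 / sqrt (1 - (- c2/R)\<^sup>2) < - c1 / sqrt (1 - (- c1/R)\<^sup>2)"
      using assms by (intro nonneg) auto
    then show ?thesis by (simp add: power2_eq_square)
  qed (use nonneg assms in auto)
qed

lemma dtheta_ds_strict_mono:
  assumes "- r x < c1" "c1 < c2" "c2 < r x"
  shows "dtheta_ds r c1 x < dtheta_ds r c2 x"
proof -
  have eq: "\<And>c. dtheta_ds r c x = (c / sqrt (1 - (c/r x)\<^sup>2)) / (r x)\<^sup>2"
    by (simp add: dtheta_ds_def mult.commute)
  show ?thesis
    unfolding eq by (intro divide_strict_right_mono div_sqrt_strict_mono assms) (use assms in auto)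
qed

lemma dtheta_ds_minus: "dtheta_ds r (- c) x = - dtheta_ds r c x"
  by (simp add: dtheta_ds_def power2_eq_square)

lemma continuous_on_dtheta_ds:
  assumes "continuous_on S r" "\<And>x. x \<in> S \<Longrightarrow> \<bar>c\<bar> < r x"
  shows "continuous_on S (dtheta_ds r c)"
proof -
  have "r x \<noteq> 0" "sqrt (1 - (c / r x)\<^sup>2) \<noteq> 0" if "x \<in> S" for x
    using assms(2)[OF that] power2_div_less_1[OF assms(2)[OF that]] by auto
  then show ?thesis unfolding dtheta_ds_def by (intro continuous_intros assms(1)) auto
qed

section \<open>The model sphere\<close>

locale model_sphere_profile =
  fixes r z :: "real \<Rightarrow> real" and M rmin :: real
  assumes model_sphere: "model_sphere r z M rmin"
begin

lemma sphere_of_revolution: "sphere_of_revolution r z M"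
  using model_sphere unfolding model_sphere_def by blast

lemma M_gt_2pi: "2 * pi < M"
  using model_sphere unfolding model_sphere_def by blast

lemma rmin_pos: "0 < rmin" and rmin_less_1: "rmin < 1" and r_quarter: "r (M/4) = rmin"
  using model_sphere unfolding model_sphere_def by auto

lemma r_has_deriv: "(r has_real_derivative deriv r x) (at x)"
proof -
  have "smooth_fun r" using sphere_of_revolution unfolding sphere_of_revolution_def by blast
  then have "r differentiable (at x)" unfolding smooth_fun_def by (metis funpow_0)
  then show ?thesis by (simp add: DERIV_deriv_iff_real_differentiable)
qed

lemma continuous_on_r: "continuous_on S r"
  by (simp add: continuous_at_imp_continuous_on r_has_deriv[THEN DERIV_isCont])

lemma r_eq_sin:
  assumes "x \<in> {-pi/2..pi/2}"
  shows "r x = sin x"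
proof (cases "0 \<le> x")
  case True
  then show ?thesis using model_sphere assms unfolding model_sphere_def by auto
next
  case False
  then have "r (- x) = sin (- x)" using model_sphere assms unfolding model_sphere_def by auto
  moreover have "r (- x) = - r x" using sphere_of_revolution unfolding sphere_of_revolution_def by blast
  ultimately show ?thesis by simp
qed

lemma r_reflect: "r (M/2 - x) = r x"
  using model_sphere unfolding model_sphere_def by blast

lemma deriv_r_reflect: "deriv r (M/2 - x) = - deriv r x"
proof -
  have "((\<lambda>x. r (M/2 - x)) has_real_derivative deriv r (M/2 - x) * (-1)) (at x)"
    by (rule DERIV_chain2[OF r_has_deriv]) (auto intro!: derivative_eq_intros)
  then have "(r has_real_derivative - deriv r (M/2 - x)) (at x)" by (simp add: r_reflect)
  then show ?thesis using r_has_deriv DERIV_unique by fastforce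
qed

lemma r_equators: "r (pi/2) = 1" "r (M/2 - pi/2) = 1"
  using r_eq_sin[of "pi/2"] r_reflect[of "pi/2"] by simp_all

lemma critical_points_r: "{s\<in>{0<..<M/2}. deriv r s = 0} = {pi/2, M/4, M/2 - pi/2}"
  using model_sphere unfolding model_sphere_def by blast

lemma round_profile:
  assumes "x \<in> {0<..pi/2}"
  shows "r x = sin x \<and> deriv r x = cos x"
proof (cases "x = pi/2")
  case True
  have "pi/2 \<in> {s\<in>{0<..<M/2}. deriv r s = 0}" unfolding critical_points_r by simp
  then show ?thesis unfolding True using r_equators by simp
next
  case False
  then have x: "x \<in> {-pi/2<..<pi/2}" using assms by auto
  have "(r has_real_derivative cos x) (at x)"
    by (rule has_field_derivative_transform_within_open[of sin _ _ "{-pi/2<..<pi/2}"])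
       (use x in \<open>auto intro!: derivative_eq_intros simp: r_eq_sin\<close>)
  then have "deriv r x = cos x" using r_has_deriv DERIV_unique by blast
  then show ?thesis using x r_eq_sin by auto
qed

text \<open>A minimum of \<open>r\<close> on \<open>[pi/2, M/4]\<close> below \<open>rmin\<close> would be a fourth critical point.\<close>

lemma rmin_le_r_lower_half:
  assumes "x \<in> {pi/2..M/4}"
  shows "rmin \<le> r x"
proof -
  obtain x0 where x0: "x0 \<in> {pi/2..M/4}" and min: "\<forall>y\<in>{pi/2..M/4}. r x0 \<le> r y"
    using continuous_attains_inf[of "{pi/2..M/4}" r] M_gt_2pi continuous_on_r by auto
  show ?thesis
  proof (rule ccontr)
    assume "\<not> rmin \<le> r x"
    then have less: "r x0 < rmin" using min assms by force
    have "x0 \<noteq> pi/2"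
    proof
      assume "x0 = pi/2"
      then have "r x0 = 1" using r_equators(1) by (simp only:)
      then show False using less rmin_less_1 by linarith
    qed
    moreover have "x0 \<noteq> M/4" using less r_quarter by auto
    ultimately have inner: "pi/2 < x0" "x0 < M/4" using x0 by auto
    have "deriv r x0 = 0"
      by (rule DERIV_local_min[OF r_has_deriv, of "min (x0 - pi/2) (M/4 - x0)"])
         (use inner in \<open>auto simp: abs_less_iff intro!: min[rule_format]\<close>)
    moreover have "0 < x0" "x0 < M/2" using inner M_gt_2pi pi_gt_zero by linarith+
    ultimately have "x0 \<in> {pi/2, M/4, M/2 - pi/2}" unfolding critical_points_r[symmetric] by simp
    then show False using inner M_gt_2pi by auto
  qed
qed

lemma rmin_le_r:
  assumes "x \<in> {pi/2..M/2 - pi/2}"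
  shows "rmin \<le> r x"
proof (cases "x \<le> M/4")
  case False
  then have "M/2 - x \<in> {pi/2..M/4}" using assms by auto
  then show ?thesis using rmin_le_r_lower_half r_reflect by fastforce
qed (use assms rmin_le_r_lower_half in auto)

lemma abs_less_r_neck:
  assumes "\<bar>c\<bar> < rmin" "x \<in> {pi/2..M/2 - pi/2}"
  shows "\<bar>c\<bar> < r x"
  using rmin_le_r[OF assms(2)] assms(1) by linarith

lemma neck_angle_strict_mono:
  assumes "- rmin < c1" "c1 < c2" "c2 < rmin"
  shows "neck_angle r M c1 < neck_angle r M c2"
  unfolding neck_angle_def
proof (rule integral_less_real)
  show "continuous_on {pi/2..M/2 - pi/2} (dtheta_ds r c1)" "continuous_on {pi/2..M/2 - pi/2} (dtheta_ds r c2)"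
    using assms by (auto intro!: continuous_on_dtheta_ds continuous_on_r abs_less_r_neck)
  show "{pi/2<..<M/2 - pi/2} \<noteq> {}" using M_gt_2pi by auto
  fix x assume "x \<in> {pi/2<..<M/2 - pi/2}"
  then have "rmin \<le> r x" using rmin_le_r by auto
  then show "dtheta_ds r c1 x < dtheta_ds r c2 x" using assms by (intro dtheta_ds_strict_mono) auto
qed

lemma continuous_on_neck_angle: "continuous_on {-rmin<..<rmin} (neck_angle r M)"
proof -
  have nonzero: "r (snd p) \<noteq> 0" "sqrt (1 - (fst p / r (snd p))\<^sup>2) \<noteq> 0"
    if "p \<in> {-rmin<..<rmin} \<times> cbox (pi/2) (M/2 - pi/2)" for p
    using abs_less_r_neck[of "fst p" "snd p"] power2_div_less_1[of "fst p" "r (snd p)"] that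
    by (auto simp: abs_less_iff)
  have "continuous_on S (\<lambda>p. r (snd p))" for S :: "(real \<times> real) set"
    by (rule continuous_on_compose2[OF continuous_on_r[of UNIV] continuous_on_snd]) auto
  then have "continuous_on ({-rmin<..<rmin} \<times> cbox (pi/2) (M/2 - pi/2)) (\<lambda>(c, x). dtheta_ds r c x)"
    unfolding dtheta_ds_def case_prod_beta by (intro continuous_intros) (use nonzero in auto)
  then have "continuous_on {-rmin<..<rmin} (\<lambda>c. integral (cbox (pi/2) (M/2 - pi/2)) (dtheta_ds r c))"
    by (rule integral_continuous_on_param)
  then show ?thesis by (simp add: neck_angle_def[abs_def])
qed

lemma neck_angle_0: "neck_angle r M 0 = 0"
proof -
  have "dtheta_ds r 0 = (\<lambda>x. 0)" by (simp add: dtheta_ds_def[abs_def])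
  then show ?thesis by (simp add: neck_angle_def)
qed

lemma neck_angle_minus: "neck_angle r M (- c) = - neck_angle r M c"
proof -
  have "dtheta_ds r (- c) = (\<lambda>x. - dtheta_ds r c x)" by (simp add: dtheta_ds_minus[abs_def])
  then show ?thesis by (simp add: neck_angle_def)
qed

end

section \<open>Geodesics crossing the neck\<close>

locale neck_crossing = model_sphere_profile +
  fixes c :: real
  assumes c_pos: "0 < c" and c_less_rmin: "c < rmin"
begin

lemma c_less_1: "c < 1"
  using c_less_rmin rmin_less_1 by linarith

text \<open>The band \<open>[band_lo, band_hi]\<close> stays away from the parallels \<open>r = c\<close> where the geodesic with
  Clairaut constant \<open>c\<close> turns, so on it the geodesic moves monotonically in \<open>s\<close>, with
  \<open>sin \<beta> = sin_beta s\<close>: it needs the time \<open>travel x\<close> to get from \<open>band_lo\<close> to \<open>x\<close>, meanwhile sweeping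
  the angle \<open>turn x\<close>, and \<open>position\<close> inverts \<open>travel\<close>.\<close>

definition "band_lo = (arcsin c + pi/2) / 2"
definition "band_hi = M/2 - band_lo"
definition "sin_beta x = sqrt (1 - (c / r x)\<^sup>2)"
definition "travel = (\<lambda>x. integral {band_lo..x} (\<lambda>y. 1 / sin_beta y))"
definition "turn = (\<lambda>x. integral {band_lo..x} (dtheta_ds r c))"
definition "position = the_inv_into {band_lo..band_hi} travel"

lemma band_lo_bounds: "arcsin c < band_lo" "band_lo < pi/2" "0 < band_lo" "c < sin band_lo"
proof -
  have arcsin: "- (pi/2) < arcsin c" "arcsin c < pi/2" "0 < arcsin c"
    using arcsin_lt_bounded[of c] arcsin_less_arcsin[of 0 c] c_pos c_less_1 by auto
  then show "arcsin c < band_lo" "band_lo < pi/2" "0 < band_lo" by (auto simp: band_lo_def)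
  then have "sin (arcsin c) < sin band_lo" using arcsin by (subst sin_mono_less_eq) auto
  then show "c < sin band_lo" using c_pos c_less_1 by simp
qed

lemma band_hi_bounds: "M/2 - pi/2 < band_hi" "band_hi < M/2" "band_lo < band_hi"
  using band_lo_bounds M_gt_2pi by (auto simp: band_hi_def)

lemma c_less_r:
  assumes "x \<in> {band_lo..band_hi}"
  shows "c < r x"
proof -
  have cap: "c < r y" if "y \<in> {band_lo..pi/2}" for y
  proof -
    have "r y = sin y" using that band_lo_bounds by (intro r_eq_sin) auto
    moreover have "sin band_lo \<le> sin y" using that band_lo_bounds by (intro sin_monotone_2pi_le) auto
    ultimately show ?thesis using band_lo_bounds by linarith
  qed
  consider "x \<le> pi/2" | "pi/2 \<le> x" "x \<le> M/2 - pi/2" | "M/2 - pi/2 \<le> x" by linarith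
  then show ?thesis
  proof cases
    case 1
    then show ?thesis using assms cap by auto
  next
    case 2
    then show ?thesis using rmin_le_r c_less_rmin by force
  next
    case 3
    then have "c < r (M/2 - x)" using assms by (intro cap) (auto simp: band_hi_def)
    then show ?thesis by (simp add: r_reflect)
  qed
qed

lemma r_pos_band: "x \<in> {band_lo..band_hi} \<Longrightarrow> 0 < r x"
  using c_less_r c_pos by fastforce

lemma c_div_r_bounds:
  assumes "x \<in> {band_lo..band_hi}"
  shows "0 < c / r x" "c / r x < 1"
  using c_less_r[OF assms] r_pos_band[OF assms] c_pos by (auto simp: field_simps)

lemma sin_beta_pos: "x \<in> {band_lo..band_hi} \<Longrightarrow> 0 < sin_beta x"
  using power2_div_less_1[of c "r x"] c_less_r[of x] c_pos by (simp add: sin_beta_def)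

lemma continuous_on_inverse_sin_beta: "continuous_on {band_lo..band_hi} (\<lambda>y. 1 / sin_beta y)"
proof -
  have "continuous_on {band_lo..band_hi} sin_beta"
    unfolding sin_beta_def by (intro continuous_intros continuous_on_r) (use r_pos_band in force)
  moreover have "sin_beta y \<noteq> 0" if "y \<in> {band_lo..band_hi}" for y
    using sin_beta_pos[OF that] by simp
  ultimately show ?thesis by (intro continuous_intros) auto
qed

lemma travel_has_deriv:
  assumes "x \<in> {band_lo<..<band_hi}"
  shows "(travel has_real_derivative 1 / sin_beta x) (at x)"
proof -
  have "(travel has_real_derivative 1 / sin_beta x) (at x within {band_lo..band_hi})"
    unfolding travel_def using assms
    by (intro integral_has_real_derivative continuous_on_inverse_sin_beta) auto
  then show ?thesis using at_within_interior[of x "{band_lo..band_hi}"] assms by simp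
qed

lemma continuous_on_dtheta_ds_band: "continuous_on {band_lo..band_hi} (dtheta_ds r c)"
  using c_less_r c_pos by (intro continuous_on_dtheta_ds continuous_on_r) auto

lemma turn_has_deriv:
  assumes "x \<in> {band_lo<..<band_hi}"
  shows "(turn has_real_derivative dtheta_ds r c x) (at x)"
proof -
  have "(turn has_real_derivative dtheta_ds r c x) (at x within {band_lo..band_hi})"
    unfolding turn_def using assms
    by (intro integral_has_real_derivative continuous_on_dtheta_ds_band) auto
  then show ?thesis using at_within_interior[of x "{band_lo..band_hi}"] assms by simp
qed

lemma continuous_on_travel: "continuous_on {band_lo..band_hi} travel"
  unfolding travel_def
  by (intro indefinite_integral_continuous_1 integrable_continuous_real continuous_on_inverse_sin_beta)

lemma strict_mono_on_travel: "strict_mono_on {band_lo..band_hi} travel"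
proof (rule strict_mono_onI)
  fix x y assume xy: "x \<in> {band_lo..band_hi}" "y \<in> {band_lo..band_hi}" "x < y"
  show "travel x < travel y"
  proof (rule DERIV_pos_imp_increasing_open[OF xy(3)])
    fix t assume "x < t" "t < y"
    then have "t \<in> {band_lo<..<band_hi}" using xy by auto
    then show "\<exists>D. (travel has_real_derivative D) (at t) \<and> 0 < D"
      using travel_has_deriv sin_beta_pos by (intro exI[of _ "1 / sin_beta t"]) auto
  qed (use continuous_on_travel xy in \<open>auto elim: continuous_on_subset\<close>)
qed

lemma travel_band_lo: "travel band_lo = 0"
  by (simp add: travel_def)

lemma travel_image: "travel ` {band_lo..band_hi} = {0..travel band_hi}"
proof
  show "travel ` {band_lo..band_hi} \<subseteq> {0..travel band_hi}"
    using strict_mono_on_leD[OF strict_mono_on_travel] band_hi_bounds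
    by (force simp flip: travel_band_lo)
  show "{0..travel band_hi} \<subseteq> travel ` {band_lo..band_hi}"
  proof
    fix y assume "y \<in> {0..travel band_hi}"
    then obtain x where "band_lo \<le> x" "x \<le> band_hi" "travel x = y"
      using IVT'[of travel band_lo y band_hi] continuous_on_travel band_hi_bounds travel_band_lo
      by auto
    then show "y \<in> travel ` {band_lo..band_hi}" by auto
  qed
qed

lemma inj_on_travel: "inj_on travel {band_lo..band_hi}"
  using strict_mono_on_travel by (rule strict_mono_on_imp_inj_on)

lemma position_travel: "x \<in> {band_lo..band_hi} \<Longrightarrow> position (travel x) = x"
  unfolding position_def by (rule the_inv_into_f_f[OF inj_on_travel])

lemma travel_position: "y \<in> {0..travel band_hi} \<Longrightarrow> travel (position y) = y"
  unfolding position_def by (rule f_the_inv_into_f[OF inj_on_travel]) (simp add: travel_image)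

lemma position_in_band: "y \<in> {0..travel band_hi} \<Longrightarrow> position y \<in> {band_lo..band_hi}"
  unfolding position_def by (rule the_inv_into_into[OF inj_on_travel]) (auto simp: travel_image)

lemma position_in_interior:
  assumes "y \<in> {0<..<travel band_hi}"
  shows "position y \<in> {band_lo<..<band_hi}"
proof -
  have y: "y \<in> {0..travel band_hi}" using assms by auto
  then have "position y \<noteq> band_lo" "position y \<noteq> band_hi"
    using travel_position[OF y] travel_band_lo assms by force+
  then show ?thesis using position_in_band[OF y] by auto
qed

lemma position_less:
  assumes "y1 \<in> {0..travel band_hi}" "y2 \<in> {0..travel band_hi}" "y1 < y2"
  shows "position y1 < position y2"
proof (rule ccontr)
  assume "\<not> position y1 < position y2"
  then have "travel (position y2) \<le> travel (position y1)"
    using position_in_band assms by (intro strict_mono_on_leD[OF strict_mono_on_travel]) auto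
  then show False using travel_position assms by auto
qed

lemma position_has_deriv:
  assumes "y \<in> {0<..<travel band_hi}"
  shows "(position has_real_derivative sin_beta (position y)) (at y)"
proof -
  have x: "position y \<in> {band_lo<..<band_hi}" using position_in_interior[OF assms] .
  have "continuous_on {0..travel band_hi} position"
    using continuous_on_inv_into[OF continuous_on_travel _ inj_on_travel]
    unfolding position_def travel_image by simp
  then have "isCont position y" using continuous_on_interior assms by fastforce
  moreover have "0 < sin_beta (position y)" using sin_beta_pos x by auto
  ultimately have "(position has_real_derivative inverse (1 / sin_beta (position y))) (at y)"
    using assms travel_position
    by (intro DERIV_inverse_function[where f = travel and g = position and x = y and a = 0
          and b = "travel band_hi", OF travel_has_deriv[OF x]]) auto
  then show ?thesis by simp
qed

lemma neck_flow:
  assumes "0 < y0" "y1 < travel band_hi"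
  shows "geod_traj_at r y0 y1 position (\<lambda>y. turn (position y)) (\<lambda>y. arccos (c / r (position y)))"
  unfolding geod_traj_at_def
proof (intro ballI conjI)
  fix y assume "y \<in> {y0..y1}"
  then have y: "y \<in> {0<..<travel band_hi}" using assms by auto
  let ?x = "position y"
  let ?u = "c / r ?x"
  have x: "?x \<in> {band_lo<..<band_hi}" using position_in_interior[OF y] .
  then have R: "0 < r ?x" and u: "0 < ?u" "?u < 1" and W: "0 < sqrt (1 - ?u\<^sup>2)"
    using r_pos_band c_div_r_bounds sin_beta_pos by (auto simp: sin_beta_def)
  have sin_arccos_u: "sin (arccos ?u) = sqrt (1 - ?u\<^sup>2)" and cos_arccos_u: "cos (arccos ?u) = ?u"
    using u by (simp_all add: sin_arccos)
  have sD: "(position has_real_derivative sqrt (1 - ?u\<^sup>2)) (at y)"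
    using position_has_deriv[OF y] by (simp add: sin_beta_def)
  have rD: "((\<lambda>y. r (position y)) has_real_derivative deriv r ?x * sqrt (1 - ?u\<^sup>2)) (at y)"
    by (rule DERIV_chain2[OF r_has_deriv sD])
  show "(position has_real_derivative sin (arccos (c / r (position y)))) (at y)"
    using sD unfolding sin_arccos_u .
  show "((\<lambda>y. arccos (c / r (position y))) has_real_derivative
      deriv r (position y) / r (position y) * cos (arccos (c / r (position y)))) (at y)"
  proof (rule DERIV_cong[OF DERIV_chain2[OF DERIV_arccos DERIV_divide[OF DERIV_const rD]]])
    show "inverse (- sqrt (1 - ?u\<^sup>2)) * ((0 * r ?x - c * (deriv r ?x * sqrt (1 - ?u\<^sup>2))) / (r ?x * r ?x))
        = deriv r ?x / r ?x * cos (arccos ?u)"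
      unfolding cos_arccos_u using R W by (simp add: field_simps)
  qed (use u R in auto)
  show "((\<lambda>y. turn (position y)) has_real_derivative cos (arccos (c / r (position y))) / r (position y)) (at y)"
  proof (rule DERIV_cong[OF DERIV_chain2[OF turn_has_deriv[OF x] sD]])
    show "dtheta_ds r c ?x * sqrt (1 - ?u\<^sup>2) = cos (arccos ?u) / r ?x"
      unfolding cos_arccos_u dtheta_ds_def using R W by (simp add: field_simps power2_eq_square)
  qed
qed

end

section \<open>The returning geodesic\<close>

context neck_crossing
begin

definition "A0 = travel (pi/2)"
definition "A1 = travel (M/4)"
definition "A2 = travel (M/2 - pi/2)"

lemma travel_times: "0 < A0" "A0 < A1" "A1 < A2" "A2 < travel band_hi"
proof -
  have "band_lo < pi/2" "pi/2 < M/4" "M/4 < M/2 - pi/2" "M/2 - pi/2 < band_hi"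
    using band_lo_bounds band_hi_bounds M_gt_2pi by auto
  then show "0 < A0" "A0 < A1" "A1 < A2" "A2 < travel band_hi"
    unfolding A0_def A1_def A2_def travel_band_lo[symmetric]
    by (auto intro!: strict_mono_onD[OF strict_mono_on_travel])
qed

lemma position_travel_times: "position A0 = pi/2" "position A1 = M/4" "position A2 = M/2 - pi/2"
proof -
  have "pi/2 \<in> {band_lo..band_hi}" "M/4 \<in> {band_lo..band_hi}" "M/2 - pi/2 \<in> {band_lo..band_hi}"
    using band_lo_bounds band_hi_bounds M_gt_2pi by auto
  then show "position A0 = pi/2" "position A1 = M/4" "position A2 = M/2 - pi/2"
    unfolding A0_def A1_def A2_def by (simp_all only: position_travel)
qed

text \<open>The geodesic leaving the minimal parallel upwards with \<open>cos \<beta> = c / rmin\<close> returns in five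
  legs: up the neck to the upper equator, around the upper cap, down the whole neck, around the
  lower cap and up again to the minimal parallel. Leg \<open>k\<close> takes the time interval
  \<open>[T(k-1), Tk]\<close>, \<open>T0 = 0\<close>, and the constants in the angles make \<open>\<theta>\<close> continuous.\<close>

definition "T1 = A2 - A1"
definition "T2 = T1 + pi"
definition "T3 = T2 + (A2 - A0)"
definition "T4 = T3 + pi"
definition "T5 = T4 + (A1 - A0)"

definition "s1 t = position (t + A1)"
definition "th1 t = turn (position (t + A1)) - turn (M/4)"
definition "b1 t = arccos (c / r (position (t + A1)))"

definition "s2 t = M/2 - cap_s c (t - T1)"
definition "th2 t = cap_theta c (t - T1) + (turn (M/2 - pi/2) - turn (M/4))"
definition "b2 t = - cap_beta c (t - T1)"

definition "s3 t = position (A2 + T2 - t)"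
definition "th3 t = pi + 2 * turn (M/2 - pi/2) - turn (M/4) - turn (position (A2 + T2 - t))"
definition "b3 t = - arccos (c / r (position (A2 + T2 - t)))"

definition "s4 t = cap_s c (t - T3)"
definition "th4 t = cap_theta c (t - T3) + (pi + 2 * turn (M/2 - pi/2) - turn (M/4) - turn (pi/2))"
definition "b4 t = cap_beta c (t - T3)"

definition "s5 t = position (t + (A0 - T4))"
definition "th5 t = turn (position (t + (A0 - T4))) +
  (2 * pi + 2 * turn (M/2 - pi/2) - turn (M/4) - 2 * turn (pi/2))"
definition "b5 t = arccos (c / r (position (t + (A0 - T4))))"

lemma leg_times: "0 < T1" "T1 < T2" "T2 < T3" "T3 < T4" "T4 < T5"
  using travel_times by (auto simp: T1_def T2_def T3_def T4_def T5_def)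

lemma leg1: "geod_traj_on r 0 T1 s1 th1 b1"
  using geod_traj_at_shift[OF neck_flow[of A1 A2], where h = A1 and C = "- turn (M/4)"] travel_times
  unfolding s1_def[abs_def] th1_def[abs_def] b1_def[abs_def] T1_def
  by (auto intro: geod_traj_at_imp_on)

lemma leg2: "geod_traj_on r T1 T2 s2 th2 b2"
  using geod_traj_at_shift[OF geod_traj_at_mirror[OF round_cap[OF round_profile c_pos c_less_1]
      r_reflect deriv_r_reflect], where h = "- T1" and C = "turn (M/2 - pi/2) - turn (M/4)"]
  unfolding s2_def[abs_def] th2_def[abs_def] b2_def[abs_def] T2_def
  by (auto intro: geod_traj_at_imp_on simp: add.commute)

lemma leg3: "geod_traj_on r T2 T3 s3 th3 b3"
  using geod_traj_at_reverse[OF neck_flow[of A0 A2], where h = "A2 + T2"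
      and C = "pi + 2 * turn (M/2 - pi/2) - turn (M/4)"] travel_times
  unfolding s3_def[abs_def] th3_def[abs_def] b3_def[abs_def] T3_def
  by (auto intro: geod_traj_at_imp_on simp: algebra_simps)

lemma leg4: "geod_traj_on r T3 T4 s4 th4 b4"
  using geod_traj_at_shift[OF round_cap[OF round_profile c_pos c_less_1], where h = "- T3"
      and C = "pi + 2 * turn (M/2 - pi/2) - turn (M/4) - turn (pi/2)"]
  unfolding s4_def[abs_def] th4_def[abs_def] b4_def[abs_def] T4_def
  by (auto intro: geod_traj_at_imp_on simp: add.commute)

lemma leg5: "geod_traj_on r T4 T5 s5 th5 b5"
  using geod_traj_at_shift[OF neck_flow[of A0 A1], where h = "A0 - T4"
      and C = "2 * pi + 2 * turn (M/2 - pi/2) - turn (M/4) - 2 * turn (pi/2)"] travel_times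
  unfolding s5_def[abs_def] th5_def[abs_def] b5_def[abs_def] T5_def
  by (auto intro: geod_traj_at_imp_on simp: algebra_simps)

lemma leg_junctions:
  "s1 T1 = s2 T1" "th1 T1 = th2 T1" "b1 T1 = b2 T1"
  "s2 T2 = s3 T2" "th2 T2 = th3 T2" "b2 T2 = b3 T2"
  "s3 T3 = s4 T3" "th3 T3 = th4 T3" "b3 T3 = b4 T3"
  "s4 T4 = s5 T4" "th4 T4 = th5 T4" "b4 T4 = b5 T4"
proof -
  have times: "T1 + A1 = A2" "T2 - T1 = pi" "A2 + T2 - T3 = A0" "T4 - T3 = pi" "T4 + (A0 - T4) = A0"
    by (simp_all add: T1_def T2_def T3_def T4_def)
  note facts = times position_travel_times cap_endpoints[OF c_pos c_less_1] r_equators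
  show "s1 T1 = s2 T1" "th1 T1 = th2 T1" "b1 T1 = b2 T1"
    by (simp_all add: facts s1_def s2_def th1_def th2_def b1_def b2_def)
  show "s2 T2 = s3 T2" "th2 T2 = th3 T2" "b2 T2 = b3 T2"
    by (simp_all add: facts s2_def s3_def th2_def th3_def b2_def b3_def)
  show "s3 T3 = s4 T3" "th3 T3 = th4 T3" "b3 T3 = b4 T3"
    by (simp_all add: facts s3_def s4_def th3_def th4_def b3_def b4_def)
  show "s4 T4 = s5 T4" "th4 T4 = th5 T4" "b4 T4 = b5 T4"
    by (simp_all add: facts s4_def s5_def th4_def th5_def b4_def b5_def)
qed

definition "s_ret t =
  (if t \<le> T1 then s1 t else if t \<le> T2 then s2 t else if t \<le> T3 then s3 t else if t \<le> T4 then s4 t else s5 t)"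
definition "th_ret t =
  (if t \<le> T1 then th1 t else if t \<le> T2 then th2 t else if t \<le> T3 then th3 t else if t \<le> T4 then th4 t else th5 t)"
definition "b_ret t =
  (if t \<le> T1 then b1 t else if t \<le> T2 then b2 t else if t \<le> T3 then b3 t else if t \<le> T4 then b4 t else b5 t)"

lemma return_geod_traj: "geod_traj_on r 0 T5 s_ret th_ret b_ret"
  unfolding s_ret_def[abs_def] th_ret_def[abs_def] b_ret_def[abs_def]
  using leg_times leg_junctions
  by (intro geod_traj_on_glue leg1 leg2 leg3 leg4 leg5) auto

lemma return_endpoints:
  "s_ret 0 = M/4" "b_ret 0 = arccos (c / rmin)" "s_ret T5 = M/4" "b_ret T5 = arccos (c / rmin)"
proof -
  have "T5 + (A0 - T4) = A1" by (simp add: T5_def)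
  then show "s_ret 0 = M/4" "b_ret 0 = arccos (c / rmin)" "s_ret T5 = M/4" "b_ret T5 = arccos (c / rmin)"
    using leg_times
    by (simp_all add: s_ret_def b_ret_def s1_def b1_def s5_def b5_def position_travel_times r_quarter)
qed

lemma turn_neck: "turn (M/2 - pi/2) - turn (pi/2) = neck_angle r M c"
proof -
  have "continuous_on {band_lo..M/2 - pi/2} (dtheta_ds r c)"
    by (rule continuous_on_subset[OF continuous_on_dtheta_ds_band]) (use band_hi_bounds in auto)
  then have "integral {band_lo..pi/2} (dtheta_ds r c) + integral {pi/2..M/2 - pi/2} (dtheta_ds r c)
      = integral {band_lo..M/2 - pi/2} (dtheta_ds r c)"
    using band_lo_bounds M_gt_2pi by (intro Henstock_Kurzweil_Integration.integral_combine integrable_continuous_real) auto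
  then show ?thesis by (simp add: turn_def neck_angle_def)
qed

lemma return_angle: "th_ret T5 - th_ret 0 = 2 * neck_angle r M c + 2 * pi"
proof -
  have "T5 + (A0 - T4) = A1" by (simp add: T5_def)
  then show ?thesis
    using leg_times turn_neck
    by (simp add: th_ret_def th1_def th5_def position_travel_times algebra_simps)
qed

lemma position_range: "y \<in> {0..travel band_hi} \<Longrightarrow> 0 < position y \<and> position y < M/2"
  using position_in_band band_lo_bounds band_hi_bounds by fastforce

lemma caps_avoid_minimal_parallel:
  assumes "t \<in> {0..pi}"
  shows "M/4 < M/2 - cap_s c t" "M/2 - cap_s c t < M/2" "0 < cap_s c t" "cap_s c t < M/4"
  using cap_s_range[OF c_pos c_less_1 assms] M_gt_2pi by auto

lemma return_range:
  assumes t: "t \<in> {0..T5}"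
  shows "0 < s_ret t \<and> s_ret t < M/2"
proof -
  consider "t \<le> T1" | "T1 < t" "t \<le> T2" | "T2 < t" "t \<le> T3" | "T3 < t" "t \<le> T4" | "T4 < t"
    by linarith
  then show ?thesis
  proof cases
    case 1
    then have "t + A1 \<in> {0..travel band_hi}" using t travel_times by (auto simp: T1_def)
    then show ?thesis using 1 position_range by (simp add: s_ret_def s1_def)
  next
    case 2
    then have "t - T1 \<in> {0..pi}" by (auto simp: T2_def)
    then show ?thesis using 2 caps_avoid_minimal_parallel[of "t - T1"] M_gt_2pi by (auto simp: s_ret_def s2_def)
  next
    case 3
    then have "A2 + T2 - t \<in> {0..travel band_hi}" using t travel_times by (auto simp: T3_def)
    then show ?thesis using 3 leg_times position_range by (auto simp: s_ret_def s3_def)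
  next
    case 4
    then have "t - T3 \<in> {0..pi}" by (auto simp: T4_def)
    then show ?thesis using 4 leg_times caps_avoid_minimal_parallel[of "t - T3"] by (auto simp: s_ret_def s4_def)
  next
    case 5
    then have "t + (A0 - T4) \<in> {0..travel band_hi}" using t travel_times by (auto simp: T5_def)
    then show ?thesis using 5 leg_times position_range by (auto simp: s_ret_def s5_def)
  qed
qed

lemma no_earlier_return:
  assumes t: "t \<in> {0<..<T5}"
  shows "\<not> (s_ret t = M/4 \<and> 0 < sin (b_ret t))"
proof -
  consider "t \<le> T1" | "T1 < t" "t \<le> T2" | "T2 < t" "t \<le> T3" | "T3 < t" "t \<le> T4" | "T4 < t"
    by linarith
  then show ?thesis
  proof cases
    case 1
    then have "position A1 < position (t + A1)"
      using t travel_times by (intro position_less) (auto simp: T1_def)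
    then show ?thesis using 1 by (simp add: s_ret_def s1_def position_travel_times)
  next
    case 2
    then have "t - T1 \<in> {0..pi}" by (auto simp: T2_def)
    then show ?thesis using 2 caps_avoid_minimal_parallel[of "t - T1"] by (auto simp: s_ret_def s2_def)
  next
    case 3
    then have "A2 + T2 - t \<in> {0..travel band_hi}" using t travel_times by (auto simp: T3_def)
    note c_div_r_bounds[OF position_in_band[OF this]]
    then have "0 \<le> sin (arccos (c / r (position (A2 + T2 - t))))"
      by (intro sin_ge_zero arccos_lbound arccos_ubound) auto
    then show ?thesis using 3 leg_times by (auto simp: b_ret_def b3_def)
  next
    case 4
    then have "t - T3 \<in> {0..pi}" by (auto simp: T4_def)
    then show ?thesis using 4 leg_times caps_avoid_minimal_parallel[of "t - T3"] by (auto simp: s_ret_def s4_def)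
  next
    case 5
    then have "position (t + (A0 - T4)) < position A1"
      using t travel_times by (intro position_less) (auto simp: T5_def)
    then show ?thesis using 5 leg_times by (auto simp: s_ret_def s5_def position_travel_times)
  qed
qed

lemma returning_geodesic:
  obtains T s th b where "0 < T" "geod_traj r T s th b" "s 0 = M/4" "s T = M/4"
    "b 0 = arccos (c / rmin)" "b T = arccos (c / rmin)"
    "\<forall>t\<in>{0..T}. 0 < s t \<and> s t < M/2" "\<forall>t\<in>{0<..<T}. \<not> (s t = M/4 \<and> 0 < sin (b t))"
    "th T - th 0 = 2 * neck_angle r M c + 2 * pi"
proof (rule that)
  show "0 < T5" using leg_times by linarith
  show "geod_traj r T5 s_ret th_ret b_ret" using return_geod_traj by (simp add: geod_traj_eq_on)
  show "\<forall>t\<in>{0..T5}. 0 < s_ret t \<and> s_ret t < M/2" using return_range by blast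
  show "\<forall>t\<in>{0<..<T5}. \<not> (s_ret t = M/4 \<and> 0 < sin (b_ret t))" using no_earlier_return by blast
qed (simp_all only: return_endpoints return_angle)

end

section \<open>The rotation function\<close>

lemma rotation_functionD:
  assumes "rotation_function r M rmin f" "geod_traj r T s th b" "0 < T"
    "s 0 = M/4" "s T = M/4" "0 < sin (b 0)" "0 < sin (b T)" "\<bar>cos (b 0)\<bar> < 1"
    "\<forall>t\<in>{0..T}. 0 < s t \<and> s t < M/2" "\<forall>t\<in>{0<..<T}. \<not> (s t = M/4 \<and> 0 < sin (b t))"
  shows "\<exists>k::int. f (- cos (b 0)) = rmin * (th T - th 0) + of_int k * (2 * pi * rmin)"
  using assms(1)[unfolded rotation_function_def, THEN conjunct2, THEN conjunct2, rule_format,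
      of "- cos (b 0)" T s th b] assms(2-)
  by (auto simp: abs_less_iff)

context neck_crossing
begin

text \<open>The reflection \<open>\<theta> \<mapsto> -\<theta>\<close> turns the returning geodesic for \<open>\<eta> = - c / rmin\<close> into the one
  for \<open>\<eta> = c / rmin\<close>.\<close>

lemma rotation_function_clairaut:
  assumes "rotation_function r M rmin f"
  shows "\<exists>k::int. f (- c / rmin) = 2 * rmin * neck_angle r M c + of_int k * (2 * pi * rmin)"
    and "\<exists>k::int. f (c / rmin) = - 2 * rmin * neck_angle r M c + of_int k * (2 * pi * rmin)"
proof -
  obtain T s th b where T: "0 < T" "geod_traj r T s th b" "s 0 = M/4" "s T = M/4"
    "b 0 = arccos (c / rmin)" "b T = arccos (c / rmin)"
    "\<forall>t\<in>{0..T}. 0 < s t \<and> s t < M/2" "\<forall>t\<in>{0<..<T}. \<not> (s t = M/4 \<and> 0 < sin (b t))"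
    "th T - th 0 = 2 * neck_angle r M c + 2 * pi"
    by (rule returning_geodesic)
  have u: "0 < c / rmin" "c / rmin < 1" using c_pos c_less_rmin rmin_pos by auto
  then have sin: "0 < sin (arccos (c / rmin))" using arccos_lt_bounded by (intro sin_gt_zero) auto
  have "\<exists>k::int. f (- cos (b 0)) = rmin * (th T - th 0) + of_int k * (2 * pi * rmin)"
    by (rule rotation_functionD[OF assms T(2,1,3,4)]) (use T(5-8) u sin in auto)
  then obtain k :: int where
    "f (- c / rmin) = rmin * (2 * neck_angle r M c + 2 * pi) + of_int k * (2 * pi * rmin)"
    using T(5,9) u by auto
  then show "\<exists>k::int. f (- c / rmin) = 2 * rmin * neck_angle r M c + of_int k * (2 * pi * rmin)"
    by (intro exI[of _ "k + 1"]) (simp add: algebra_simps)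
  have reflected: "geod_traj r T s (\<lambda>t. - th t) (\<lambda>t. pi - b t)"
    using geod_traj_on_reflect T(2) unfolding geod_traj_eq_on by blast
  have "\<exists>k::int. f (- cos (pi - b 0)) = rmin * (- th T - - th 0) + of_int k * (2 * pi * rmin)"
    by (rule rotation_functionD[OF assms reflected T(1,3,4)]) (use T(5-8) u sin in auto)
  then obtain k :: int where
    "f (c / rmin) = - rmin * (2 * neck_angle r M c + 2 * pi) + of_int k * (2 * pi * rmin)"
    using T(5,9) u by (auto simp: algebra_simps)
  then show "\<exists>k::int. f (c / rmin) = - 2 * rmin * neck_angle r M c + of_int k * (2 * pi * rmin)"
    by (intro exI[of _ "k - 1"]) (simp add: algebra_simps)
qed

end

context model_sphere_profile
begin

lemma abs_rmin_mult_less: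
  assumes "\<eta> \<in> {-1<..<1}"
  shows "\<bar>rmin * \<eta>\<bar> < rmin"
  using assms rmin_pos by (simp add: abs_mult abs_less_iff)

lemma neck_crossingI: "0 < c \<Longrightarrow> c < rmin \<Longrightarrow> neck_crossing r z M rmin c"
  by (intro neck_crossing.intro model_sphere_profile_axioms neck_crossing_axioms.intro)

lemma continuous_on_neck_angle_scaled: "continuous_on {-1<..<1} (\<lambda>\<eta>. neck_angle r M (- rmin * \<eta>))"
  using abs_rmin_mult_less
  by (intro continuous_on_compose2[OF continuous_on_neck_angle] continuous_intros) (auto simp: abs_less_iff)

lemma neck_angle_scaled_less:
  assumes "x \<in> {-1<..<1}" "y \<in> {-1<..<1}" "x < y"
  shows "neck_angle r M (- rmin * y) < neck_angle r M (- rmin * x)"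
  using abs_rmin_mult_less[OF assms(1)] abs_rmin_mult_less[OF assms(2)] assms(3) rmin_pos
  by (intro neck_angle_strict_mono) (auto simp: abs_less_iff)

lemma rotation_function_congruent:
  assumes f: "rotation_function r M rmin f" and \<eta>: "\<eta> \<in> {-1<..<1}"
  shows "\<exists>k::int. f \<eta> = 2 * rmin * neck_angle r M (- rmin * \<eta>) + of_int k * (2 * pi * rmin)"
proof (cases \<eta> "0::real" rule: linorder_cases)
  case less
  have "0 < - rmin * \<eta>" using less rmin_pos by (simp add: mult_pos_neg)
  then interpret neck_crossing r z M rmin "- rmin * \<eta>"
    using abs_rmin_mult_less[OF \<eta>] by (intro neck_crossingI) (auto simp: abs_less_iff)
  show ?thesis using rotation_function_clairaut(1)[OF f] rmin_pos by simp
next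
  case equal
  moreover have "f 0 = 0" using f unfolding rotation_function_def by blast
  ultimately show ?thesis by (intro exI[of _ 0]) (simp add: neck_angle_0)
next
  case greater
  then interpret neck_crossing r z M rmin "rmin * \<eta>"
    using abs_rmin_mult_less[OF \<eta>] rmin_pos by (intro neck_crossingI) (auto simp: abs_less_iff)
  show ?thesis using rotation_function_clairaut(2)[OF f] rmin_pos by (simp add: neck_angle_minus)
qed

end

lemma continuous_congruent_eq:
  fixes f g :: "'a::topological_space \<Rightarrow> real"
  assumes "connected S" "continuous_on S f" "continuous_on S g" "L \<noteq> 0"
    and congruent: "\<And>x. x \<in> S \<Longrightarrow> \<exists>k::int. f x = g x + of_int k * L"
    and "a \<in> S" "f a = g a" "x \<in> S"
  shows "f x = g x"
proof -
  define h where "h x = (f x - g x) / L" for x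
  have "h x \<in> \<int>" if "x \<in> S" for x
    using congruent[OF that] \<open>L \<noteq> 0\<close> by (auto simp: h_def)
  then have "\<exists>e>0. \<forall>y. y \<in> S \<and> h y \<noteq> h x \<longrightarrow> e \<le> norm (h y - h x)" if "x \<in> S" for x
    using that by (intro exI[of _ 1]) (auto intro: Ints_nonzero_abs_ge1)
  moreover have "continuous_on S h" unfolding h_def by (intro continuous_intros assms) (use assms in auto)
  ultimately have "h constant_on S" by (intro continuous_discrete_range_constant assms)
  then have "h x = h a" using assms unfolding constant_on_def by auto
  then show ?thesis using assms by (simp add: h_def)
qed

theorem mainTheorem2:
  fixes r z :: "real \<Rightarrow> real" and M rmin :: real and f :: "real \<Rightarrow> real"
  assumes "model_sphere r z M rmin"
    and "rotation_function r M rmin f"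
  shows "\<forall>x\<in>{-1<..<1}. \<forall>y\<in>{-1<..<1}. x < y \<longrightarrow> f y < f x"
proof -
  interpret model_sphere_profile r z M rmin by (rule model_sphere_profile.intro) (rule assms(1))
  define F where "F \<eta> = 2 * rmin * neck_angle r M (- rmin * \<eta>)" for \<eta>
  have F_cont: "continuous_on {-1<..<1} F"
    unfolding F_def by (intro continuous_intros continuous_on_neck_angle_scaled)
  have f_cont: "continuous_on {-1<..<1} f" and f_0: "f 0 = 0"
    using assms(2) unfolding rotation_function_def by blast+
  have f_eq_F: "f \<eta> = F \<eta>" if "\<eta> \<in> {-1<..<1}" for \<eta>
  proof (rule continuous_congruent_eq[OF _ f_cont F_cont, where a = 0 and L = "2 * pi * rmin"])
    show "connected {-1<..<1::real}" by (simp add: is_interval_connected_1[symmetric] is_interval_def)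
    show "\<exists>k::int. f x = F x + of_int k * (2 * pi * rmin)" if "x \<in> {-1<..<1}" for x
      using rotation_function_congruent[OF assms(2) that] by (simp add: F_def)
  qed (use that f_0 rmin_pos in \<open>simp_all add: F_def neck_angle_0\<close>)
  show ?thesis
    using f_eq_F neck_angle_scaled_less rmin_pos by (simp add: F_def)
qed

end
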